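(* Let $D$ be a positive integer that is not a sum of two integer squares, and let $\mathcal{C}$ be one of the following circles: $\mathcal{C}_D: |z|^2-D=0$; $\mathcal{C}_{D,1}: 2|z|^2+z+\bar z-\frac{D-1}{2}=0$ (when $D\equiv1\pmod4$); $\mathcal{C}_{D,2}: 2|z|^2+iz-i\bar z-\frac{D-1}{2}=0$ (when $D\equiv1\pmod4$); $\mathcal{C}_{D,3}: 2|z|^2+(1+i)z+(1-i)\bar z-\frac{D-2}{2}=0$ (when $D\equiv2\pmod4$). Then the image of $\mathcal{C}$ under $z\mapsto z+1$ (i.e. under $\begin{pmatrix}1&1\\0&1\end{pmatrix}$) intersects $\mathcal{C}$ nontrivially.
   Context: "Intersect nontrivially" means the two circles cross, i.e. meet in exactly two points. *)

theory Defs
  imports "HOL-Analysis.Analysis"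
begin

definition sum_two_squares :: "int \<Rightarrow> bool" where
  "sum_two_squares n \<longleftrightarrow> (\<exists>a b :: int. n = a\<^sup>2 + b\<^sup>2)"

definition circD :: "int \<Rightarrow> complex set" where
  "circD D = {z. z * cnj z - of_int D = 0}"

definition circD1 :: "int \<Rightarrow> complex set" where
  "circD1 D = {z. 2 * (z * cnj z) + z + cnj z - of_int (D - 1) / 2 = 0}"

definition circD2 :: "int \<Rightarrow> complex set" where
  "circD2 D = {z. 2 * (z * cnj z) + \<i> * z - \<i> * cnj z - of_int (D - 1) / 2 = 0}"

definition circD3 :: "int \<Rightarrow> complex set" where
  "circD3 D = {z. 2 * (z * cnj z) + (1 + \<i>) * z + (1 - \<i>) * cnj z - of_int (D - 2) / 2 = 0}"

definition intersect_nontrivially :: "complex set \<Rightarrow> complex set \<Rightarrow> bool" where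
  "intersect_nontrivially A B \<longleftrightarrow> card (A \<inter> B) = 2"

end

theory Submission
  imports Defs
begin

text \<open>All four curves are circles of radius at least \<open>sqrt D / 2\<close>. A circle of radius
  \<open>r\<close> and its translate by 1 meet exactly in the two points with real part half-way between
  the centres, and these are distinct as soon as \<open>r > 1/2\<close>. Since 1 is a sum of two squares,
  \<open>D \<ge> 2\<close>, which gives the required radius bound.\<close>

lemma mult_cnj_eq_of_real_iff_cmod:
  "z * cnj z = complex_of_real R \<longleftrightarrow> cmod z = sqrt R"
proof (cases "R \<ge> 0")
  case True
  have "z * cnj z = complex_of_real R \<longleftrightarrow> (cmod z)\<^sup>2 = R"
    by (metis complex_norm_square of_real_eq_iff)
  also have "\<dots> \<longleftrightarrow> cmod z = sqrt R"
    using True by auto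
  finally show ?thesis .
next
  case False
  then have "sqrt R < 0"
    by simp
  moreover have "z * cnj z \<noteq> complex_of_real R"
    using False by (metis complex_norm_square of_real_eq_iff zero_le_power2)
  ultimately show ?thesis
    by (metis norm_ge_zero not_le)
qed

lemma mem_sphere_iff_mult_cnj:
  "z \<in> sphere c (sqrt R) \<longleftrightarrow> (z - c) * cnj (z - c) = complex_of_real R"
  by (metis dist_norm mem_sphere mult_cnj_eq_of_real_iff_cmod norm_minus_commute)

lemma sphere_Int_sphere_add_1:
  fixes c :: complex
  assumes r: "r > 1/2"
  defines "s \<equiv> sqrt (r\<^sup>2 - 1/4)"
  shows "sphere c r \<inter> sphere (c + 1) r = {c + Complex (1/2) s, c + Complex (1/2) (- s)}"
proof -
  have s: "s\<^sup>2 = r\<^sup>2 - 1/4"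
    using power_strict_mono[OF r, of 2] by (simp add: s_def power_divide)
  have on_sphere: "z \<in> sphere a r \<longleftrightarrow> (Re (z - a))\<^sup>2 + (Im (z - a))\<^sup>2 = r\<^sup>2" for z a
  proof -
    have "z \<in> sphere a r \<longleftrightarrow> cmod (z - a) = r"
      by (simp add: dist_norm norm_minus_commute)
    also have "\<dots> \<longleftrightarrow> (cmod (z - a))\<^sup>2 = r\<^sup>2"
      using r by (simp add: power2_eq_iff_nonneg)
    finally show ?thesis
      by (simp only: cmod_power2)
  qed
  show ?thesis
  proof (intro set_eqI iffI)
    fix z assume "z \<in> sphere c r \<inter> sphere (c + 1) r"
    then have on_c: "(Re (z - c))\<^sup>2 + (Im (z - c))\<^sup>2 = r\<^sup>2"
      and on_c_plus_1: "(Re (z - c) - 1)\<^sup>2 + (Im (z - c))\<^sup>2 = r\<^sup>2"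
      by (simp_all only: Int_iff on_sphere) (simp add: algebra_simps)
    then have re: "Re (z - c) = 1/2"
      by (simp add: power2_eq_square algebra_simps)
    have "(Im (z - c))\<^sup>2 = s\<^sup>2"
      using on_c[unfolded re] s by (simp add: power_divide)
    then have "Im (z - c) = s \<or> Im (z - c) = - s"
      by (simp add: power2_eq_iff)
    with re show "z \<in> {c + Complex (1/2) s, c + Complex (1/2) (- s)}"
      by (auto simp: complex_eq_iff)
  next
    fix z assume "z \<in> {c + Complex (1/2) s, c + Complex (1/2) (- s)}"
    with s show "z \<in> sphere c r \<inter> sphere (c + 1) r"
      unfolding Int_iff on_sphere by (auto simp: power_divide)
  qed
qed

lemma card_translate_sphere_Int_sphere:
  fixes c :: complex
  assumes "r > 1/2"
  shows "card ((\<lambda>z. z + 1) ` sphere c r \<inter> sphere c r) = 2"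
proof -
  have "(\<lambda>z. z + 1) ` sphere c r = sphere (c + 1) r"
    by (simp add: sphere_translation add.commute)
  moreover have "sqrt (r\<^sup>2 - 1/4) > 0"
    using power_strict_mono[OF assms, of 2] by (simp add: power_divide)
  ultimately show ?thesis
    using sphere_Int_sphere_add_1[OF assms, of c] by (simp add: Int_commute)
qed

lemma circD_eq_sphere: "circD D = sphere 0 (sqrt (of_int D))"
  by (auto simp: circD_def mem_sphere_iff_mult_cnj simp del: mem_sphere)

lemma circD1_eq_sphere: "circD1 D = sphere (- 1/2) (sqrt (of_int D / 4))"
  by (auto simp: circD1_def mem_sphere_iff_mult_cnj complex_eq_iff field_simps simp del: mem_sphere)

lemma circD2_eq_sphere: "circD2 D = sphere (\<i> / 2) (sqrt (of_int D / 4))"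
  by (auto simp: circD2_def mem_sphere_iff_mult_cnj complex_eq_iff field_simps simp del: mem_sphere)

lemma circD3_eq_sphere: "circD3 D = sphere ((- 1 + \<i>) / 2) (sqrt (of_int D / 4))"
  by (auto simp: circD3_def mem_sphere_iff_mult_cnj complex_eq_iff field_simps simp del: mem_sphere)

theorem lemma7p3:
  fixes D :: int
  assumes "D > 0" and "\<not> sum_two_squares D"
  shows "intersect_nontrivially ((\<lambda>z. z + 1) ` circD D) (circD D)
    \<and> (D mod 4 = 1 \<longrightarrow> intersect_nontrivially ((\<lambda>z. z + 1) ` circD1 D) (circD1 D))
    \<and> (D mod 4 = 1 \<longrightarrow> intersect_nontrivially ((\<lambda>z. z + 1) ` circD2 D) (circD2 D))
    \<and> (D mod 4 = 2 \<longrightarrow> intersect_nontrivially ((\<lambda>z. z + 1) ` circD3 D) (circD3 D))"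
proof -
  have "D \<noteq> 1"
    using assms(2) unfolding sum_two_squares_def by (metis add_0 one_power2 zero_power2)
  with assms(1) have "D \<ge> 2"
    by linarith
  then have "sqrt (of_int D) > 1/2" "sqrt (of_int D / 4) > 1/2"
    by (intro real_less_rsqrt; simp add: power_divide)+
  then show ?thesis
    unfolding intersect_nontrivially_def circD_eq_sphere circD1_eq_sphere
      circD2_eq_sphere circD3_eq_sphere
    by (simp add: card_translate_sphere_Int_sphere)
qed

end
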